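(* Consider any instance of the rescheduling problem $(1, h_1 \mid \Delta_{\max}\le k \mid \mu\Delta_{\max} + \sum_{j=1}^n w_j C_j)$ described in the context, and suppose it admits at least one feasible schedule. Then there exists an optimal schedule $\sigma^*$ such that (a) the jobs in the earlier schedule of $\sigma^*$ are processed in increasing order of their indices (i.e., in the same order as in $\pi^*$); and (b) the jobs in the later schedule of $\sigma^*$ are also processed in increasing order of their indices.
   Context: An instance consists of $n$ jobs $J_1,\dots,J_n$, where $J_j$ has a positive integer processing time $p_j$ and a positive integer weight $w_j$, indexed in WSPT order $p_1/w_1\le p_2/w_2\le\cdots\le p_n/w_n$; integers $T_1,T_2$ with $0\le T_1<T_2$ (the machine is unavailable during $[T_1,T_2]$); an integer $k$; and a rational $\mu\ge 0$. The original schedule $\pi^*$ processes $J_1,\dots,J_n$ in this order consecutively from time $0$ without idle time, so $S_j(\pi^* )=\sum_{i<j}p_i$ and $C_j(\pi^* )=\sum_{i\le j}p_i$. A schedule $\sigma$ assigns each job a start time $S_j(\sigma)\ge 0$; jobs are processed non-preemptively on a single machine, $C_j(\sigma)=S_j(\sigma)+p_j$, no two jobs overlap in time, and no job is processed inside the unavailability interval (each job has $C_j(\sigma)\le T_1$ or $S_j(\sigma)\ge T_2$). Let $\Delta_j=|C_j(\sigma)-C_j(\pi^* )|$ and $\Delta_{\max}=\max_j\Delta_j$. A schedule is feasible if $\Delta_{\max}\le k$; an optimal schedule is a feasible schedule minimizing $\mu\Delta_{\max}+\sum_{j=1}^n w_jC_j(\sigma)$. The earlier schedule of $\sigma$ consists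 of the jobs with $C_j(\sigma)\le T_1$; the later schedule consists of the jobs completed after $T_2$. Standing assumptions: some job has $C_j(\pi^* )>T_1$; letting $j_1$ be the smallest such index, $p_{\min}\le T_1<P$ and $T_2-S_{j_1}(\pi^* )\le k$, where $p_{\min}=\min_j p_j$ and $P=\sum_j p_j$. *)

theory Defs
  imports Complex_Main
begin

text \<open>Jobs are indexed 1..n; p j, w j are processing times and weights.
A schedule is given by its start-time function S :: nat => real.\<close>

definition Cpi :: "(nat \<Rightarrow> nat) \<Rightarrow> nat \<Rightarrow> real" where
  "Cpi p j = real (\<Sum>i\<in>{1..j}. p i)"

definition Spi :: "(nat \<Rightarrow> nat) \<Rightarrow> nat \<Rightarrow> real" where
  "Spi p j = real (\<Sum>i\<in>{1..<j}. p i)"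

definition Cs :: "(nat \<Rightarrow> nat) \<Rightarrow> (nat \<Rightarrow> real) \<Rightarrow> nat \<Rightarrow> real" where
  "Cs p S j = S j + real (p j)"

definition valid_schedule ::
  "nat \<Rightarrow> (nat \<Rightarrow> nat) \<Rightarrow> nat \<Rightarrow> nat \<Rightarrow> (nat \<Rightarrow> real) \<Rightarrow> bool" where
  "valid_schedule n p T1 T2 S \<longleftrightarrow>
     (\<forall>j\<in>{1..n}. S j \<ge> 0) \<and>
     (\<forall>i\<in>{1..n}. \<forall>j\<in>{1..n}. i \<noteq> j \<longrightarrow> Cs p S i \<le> S j \<or> Cs p S j \<le> S i) \<and>
     (\<forall>j\<in>{1..n}. Cs p S j \<le> real T1 \<or> S j \<ge> real T2)"

definition Delta_max :: "nat \<Rightarrow> (nat \<Rightarrow> nat) \<Rightarrow> (nat \<Rightarrow> real) \<Rightarrow> real" where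
  "Delta_max n p S = Max ((\<lambda>j. \<bar>Cs p S j - Cpi p j\<bar>) ` {1..n})"

definition feasible ::
  "nat \<Rightarrow> (nat \<Rightarrow> nat) \<Rightarrow> nat \<Rightarrow> nat \<Rightarrow> int \<Rightarrow> (nat \<Rightarrow> real) \<Rightarrow> bool" where
  "feasible n p T1 T2 k S \<longleftrightarrow>
     valid_schedule n p T1 T2 S \<and> Delta_max n p S \<le> real_of_int k"

definition cost ::
  "nat \<Rightarrow> (nat \<Rightarrow> nat) \<Rightarrow> (nat \<Rightarrow> nat) \<Rightarrow> real \<Rightarrow> (nat \<Rightarrow> real) \<Rightarrow> real" where
  "cost n p w mu S = mu * Delta_max n p S + (\<Sum>j\<in>{1..n}. real (w j) * Cs p S j)"

definition optimal ::
  "nat \<Rightarrow> (nat \<Rightarrow> nat) \<Rightarrow> (nat \<Rightarrow> nat) \<Rightarrow> nat \<Rightarrow> nat \<Rightarrow> int \<Rightarrow> real \<Rightarrow> (nat \<Rightarrow> real) \<Rightarrow> bool" where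
  "optimal n p w T1 T2 k mu S \<longleftrightarrow>
     feasible n p T1 T2 k S \<and>
     (\<forall>S'. feasible n p T1 T2 k S' \<longrightarrow> cost n p w mu S \<le> cost n p w mu S')"

end

theory Submission
  imports Defs "HOL-Analysis.Analysis"
begin

text \<open>An optimal schedule exists by compactness; take one with the fewest inversions of the
  index order. If two jobs on the same side of the unavailability interval were inverted,
  some inverted pair \<open>i < j\<close> on that side would be adjacent, with \<open>j\<close> running first.
  Starting \<open>i\<close> at the old start of \<open>j\<close> and letting \<open>j\<close> follow keeps the schedule valid,
  bounds each new deviation by an old one (as \<open>C\<^sub>i(\<pi>\<^sup>*) + p\<^sub>j \<le> C\<^sub>j(\<pi>\<^sup>*)\<close>), does not increase \<open>\<Sum> w\<^sub>j C\<^sub>j\<close> by the WSPT order, and removes an inversion.\<close>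

section \<open>Existence of an optimal schedule\<close>

lemma deviation_le_Delta_max:
  "j \<in> {1..n} \<Longrightarrow> \<bar>Cs p S j - Cpi p j\<bar> \<le> Delta_max n p S"
  unfolding Delta_max_def by (intro Max_ge) auto

lemma Delta_max_le_iff:
  "n \<ge> 1 \<Longrightarrow> Delta_max n p S \<le> c \<longleftrightarrow> (\<forall>j\<in>{1..n}. \<bar>Cs p S j - Cpi p j\<bar> \<le> c)"
  unfolding Delta_max_def by (subst Max_le_iff) auto

lemma closed_valid_schedules: "closed {S. valid_schedule n p T1 T2 S}"
  unfolding valid_schedule_def Cs_def Ball_def
  by (intro closed_Collect_conj closed_Collect_all closed_Collect_imp closed_Collect_disj
        closed_Collect_le open_Collect_const continuous_intros continuous_on_product_coordinates)

lemma closed_bounded_deviations: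
  "closed {S. \<forall>j\<in>{1..n}. \<bar>Cs p S j - Cpi p j\<bar> \<le> c}"
  unfolding Cs_def Ball_def
  by (intro closed_Collect_all closed_Collect_imp open_Collect_const closed_Collect_le
        continuous_intros continuous_on_product_coordinates)

lemma continuous_on_Max:
  fixes f :: "'a \<Rightarrow> 'b::topological_space \<Rightarrow> real"
  assumes "finite A" "A \<noteq> {}" "\<And>a. a \<in> A \<Longrightarrow> continuous_on K (f a)"
  shows "continuous_on K (\<lambda>x. Max ((\<lambda>a. f a x) ` A))"
  using assms
proof (induction A rule: finite_ne_induct)
  case (insert a F)
  then have "continuous_on K (\<lambda>x. max (f a x) (Max ((\<lambda>a. f a x) ` F)))"
    by (intro continuous_on_max) auto
  with insert show ?case by simp
qed simp

lemma continuous_on_cost: "continuous_on UNIV (cost n p w mu)"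
proof (cases "n = 0")
  case False
  then have "continuous_on UNIV (Delta_max n p)"
    unfolding Delta_max_def Cs_def
    by (intro continuous_on_Max) (auto intro!: continuous_intros continuous_on_product_coordinates)
  then show ?thesis
    unfolding cost_def Cs_def by (intro continuous_intros continuous_on_product_coordinates) auto
qed (simp add: cost_def Delta_max_def)

lemma schedules_agreeing_on_jobs:
  assumes "\<And>j. j \<in> {1..n} \<Longrightarrow> S j = S' j"
  shows "feasible n p T1 T2 k S \<longleftrightarrow> feasible n p T1 T2 k S'"
    and "cost n p w mu S = cost n p w mu S'"
proof -
  have C: "\<And>j. j \<in> {1..n} \<Longrightarrow> Cs p S j = Cs p S' j"
    using assms by (simp add: Cs_def)
  then have "Delta_max n p S = Delta_max n p S'"
    unfolding Delta_max_def by (metis (no_types, lifting) image_cong)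
  moreover have "valid_schedule n p T1 T2 S \<longleftrightarrow> valid_schedule n p T1 T2 S'"
    unfolding valid_schedule_def using C assms by auto
  ultimately show "feasible n p T1 T2 k S \<longleftrightarrow> feasible n p T1 T2 k S'"
    and "cost n p w mu S = cost n p w mu S'"
    unfolding feasible_def cost_def using C by simp_all
qed

text \<open>Start times of jobs outside \<open>{1..n}\<close> are irrelevant, so we may fix them to \<open>0\<close>;
  the remaining start times range over a product of compact intervals, on which the
  continuous cost attains its minimum.\<close>

theorem optimal_schedule_exists:
  assumes "n \<ge> 1" and "\<exists>S. feasible n p T1 T2 k S"
  shows "\<exists>S. optimal n p w T1 T2 k mu S"
proof -
  define I where "I m = (if m \<in> {1..n} then {Cpi p m - p m - k .. Cpi p m - p m + k} else {0})"
    for m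
  define K where "K = PiE UNIV I \<inter> {S. valid_schedule n p T1 T2 S} \<inter>
    {S. \<forall>j\<in>{1..n}. \<bar>Cs p S j - Cpi p j\<bar> \<le> real_of_int k}"
  define truncate where "truncate S m = (if m \<in> {1..n} then S m else 0)"
    for S :: "nat \<Rightarrow> real" and m
  have feasible_iff: "feasible n p T1 T2 k S \<longleftrightarrow> valid_schedule n p T1 T2 S \<and>
      (\<forall>j\<in>{1..n}. \<bar>Cs p S j - Cpi p j\<bar> \<le> real_of_int k)" for S
    unfolding feasible_def using Delta_max_le_iff[OF assms(1)] by simp
  have truncate_agrees: "truncate S j = S j" if "j \<in> {1..n}" for S j
    using that by (simp add: truncate_def)
  have "compactin (product_topology (\<lambda>_. euclidean) UNIV) (PiE UNIV I)"
    by (subst compactin_PiE) (auto simp: I_def)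
  then have "compact (PiE UNIV I)"
    by (simp add: euclidean_product_topology)
  then have "compact K"
    unfolding K_def using closed_valid_schedules closed_bounded_deviations
    by (intro compact_Int_closed) auto
  have truncate_in_K: "truncate S \<in> K" if "feasible n p T1 T2 k S" for S
  proof -
    have "feasible n p T1 T2 k (truncate S)"
      using that schedules_agreeing_on_jobs(1)[of n "truncate S" S] truncate_agrees by blast
    then show ?thesis
      unfolding K_def feasible_iff
      by (force simp: truncate_def I_def Cs_def abs_le_iff)
  qed
  have K_feasible: "S \<in> K \<Longrightarrow> feasible n p T1 T2 k S" for S
    unfolding K_def feasible_iff by auto
  have "K \<noteq> {}"
    using assms(2) truncate_in_K by blast
  then obtain S0 where "S0 \<in> K" and S0_min: "\<And>S. S \<in> K \<Longrightarrow> cost n p w mu S0 \<le> cost n p w mu S"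
    using continuous_attains_inf[OF \<open>compact K\<close> _ continuous_on_subset[OF continuous_on_cost]]
    by blast
  have "cost n p w mu S0 \<le> cost n p w mu S" if "feasible n p T1 T2 k S" for S
    using S0_min[OF truncate_in_K[OF that]] schedules_agreeing_on_jobs(2)[of n "truncate S" S]
      truncate_agrees
    by simp
  then show ?thesis
    unfolding optimal_def using K_feasible[OF \<open>S0 \<in> K\<close>] by blast
qed

section \<open>Interchanging two adjacent jobs\<close>

definition inversions :: "nat \<Rightarrow> (nat \<Rightarrow> real) \<Rightarrow> (nat \<times> nat) set" where
  "inversions n S = {(a, b). a \<in> {1..n} \<and> b \<in> {1..n} \<and> a < b \<and> S b < S a}"

definition interchange :: "(nat \<Rightarrow> nat) \<Rightarrow> (nat \<Rightarrow> real) \<Rightarrow> nat \<Rightarrow> nat \<Rightarrow> nat \<Rightarrow> real" where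
  "interchange p S i j = S(i := S j, j := S j + real (p i))"

lemma finite_inversions: "finite (inversions n S)"
  by (rule finite_subset[of _ "{1..n} \<times> {1..n}"]) (auto simp: inversions_def)

lemma Cpi_add_le:
  assumes "i < j"
  shows "Cpi p i + real (p j) \<le> Cpi p j"
proof -
  have "(\<Sum>m\<in>{1..i}. p m) + p j = (\<Sum>m\<in>insert j {1..i}. p m)"
    using assms by simp
  also have "\<dots> \<le> (\<Sum>m\<in>{1..j}. p m)"
    using assms by (intro sum_mono2) auto
  finally show ?thesis
    unfolding Cpi_def by (metis of_nat_add of_nat_le_iff)
qed

lemma valid_schedule_precedes:
  assumes "valid_schedule n p T1 T2 S" "i \<in> {1..n}" "j \<in> {1..n}" "S j < S i"
  shows "S j + p j \<le> S i"
proof -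
  have "Cs p S i \<le> S j \<or> Cs p S j \<le> S i"
    using assms unfolding valid_schedule_def by (metis less_irrefl)
  with assms(4) show ?thesis
    unfolding Cs_def by auto
qed

lemma valid_schedule_start_times_inj:
  assumes "valid_schedule n p T1 T2 S" "\<forall>m\<in>{1..n}. p m > 0"
    and "i \<in> {1..n}" "j \<in> {1..n}" "i \<noteq> j"
  shows "S i \<noteq> S j"
  using assms unfolding valid_schedule_def Cs_def
  by (metis add_le_same_cancel1 not_le of_nat_0_less_iff)

lemma interchange_weighted_completion_le:
  fixes S :: "nat \<Rightarrow> real"
  assumes "i \<in> {1..n}" "j \<in> {1..n}" "i \<noteq> j" "w i > 0" "w j > 0"
    and wspt: "real (p i) / real (w i) \<le> real (p j) / real (w j)"
    and before: "S j + p j \<le> S i"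
  shows "(\<Sum>m\<in>{1..n}. real (w m) * Cs p (interchange p S i j) m)
       \<le> (\<Sum>m\<in>{1..n}. real (w m) * Cs p S m)"
proof -
  define S' where "S' = interchange p S i j"
  define g where "g T m = real (w m) * Cs p T m" for T m
  have "(\<Sum>m\<in>{1..n}. g S' m) - (\<Sum>m\<in>{1..n}. g S m) = (\<Sum>m\<in>{1..n}. g S' m - g S m)"
    by (simp add: sum_subtractf)
  also have "\<dots> = (\<Sum>m\<in>{i, j}. g S' m - g S m)"
    using assms(1-3) by (intro sum.mono_neutral_right) (auto simp: g_def S'_def interchange_def Cs_def)
  also have "\<dots> = real (w i) * (S j - S i) + real (w j) * p i"
    using assms(3) by (simp add: g_def S'_def interchange_def Cs_def algebra_simps)
  also have "\<dots> \<le> 0"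
  proof -
    have "real (p i) * real (w j) \<le> real (p j) * real (w i)"
      using wspt assms(4,5) by (simp add: divide_simps)
    moreover have "real (w i) * p j \<le> real (w i) * (S i - S j)"
      using before by (intro mult_left_mono) auto
    ultimately show ?thesis
      by (simp add: algebra_simps)
  qed
  finally show ?thesis
    by (simp add: g_def S'_def)
qed

context
  fixes n :: nat and p :: "nat \<Rightarrow> nat" and T1 T2 :: nat and S :: "nat \<Rightarrow> real" and i j :: nat
  assumes valid: "valid_schedule n p T1 T2 S"
    and p_pos: "\<forall>m\<in>{1..n}. p m > 0"
    and ij: "i \<in> {1..n}" "j \<in> {1..n}" "S j < S i"
    and adjacent: "\<forall>m\<in>{1..n}. \<not> (S j < S m \<and> S m < S i)"
begin

private lemma ij_distinct: "i \<noteq> j"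
  using ij(3) by blast

private lemma j_before_i: "S j + p j \<le> S i"
  using valid_schedule_precedes[OF valid ij] .

private lemma interchange_simps:
  "interchange p S i j i = S j"
  "interchange p S i j j = S j + p i"
  "m \<noteq> i \<Longrightarrow> m \<noteq> j \<Longrightarrow> interchange p S i j m = S m"
  using ij_distinct by (simp_all add: interchange_def)

private lemma other_job_outside:
  assumes "m \<in> {1..n}" "m \<noteq> i" "m \<noteq> j"
  shows "S m + p m \<le> S j \<or> S i + p i \<le> S m"
proof -
  have "Cs p S m \<le> S j \<or> Cs p S j \<le> S m" "Cs p S m \<le> S i \<or> Cs p S i \<le> S m"
    using valid assms ij unfolding valid_schedule_def by auto
  moreover have "\<not> (S j < S m \<and> S m < S i)" "p m > 0" "p i > 0" "p j > 0"
    using adjacent p_pos assms ij by auto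
  ultimately show ?thesis
    unfolding Cs_def by (smt (verit) of_nat_0_less_iff)
qed

lemma interchange_valid_schedule:
  assumes side: "Cs p S i \<le> real T1 \<or> S j \<ge> real T2"
  shows "valid_schedule n p T1 T2 (interchange p S i j)"
proof -
  let ?S' = "interchange p S i j"
  have nonneg: "\<forall>m\<in>{1..n}. S m \<ge> 0"
    and disjoint: "\<forall>a\<in>{1..n}. \<forall>b\<in>{1..n}. a \<noteq> b \<longrightarrow> Cs p S a \<le> S b \<or> Cs p S b \<le> S a"
    and gap: "\<forall>m\<in>{1..n}. Cs p S m \<le> real T1 \<or> S m \<ge> real T2"
    using valid unfolding valid_schedule_def by auto
  have ends: "S j + p i + p j \<le> S i + p i"
    using j_before_i by simp
  have "?S' m \<ge> 0" if "m \<in> {1..n}" for m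
    using nonneg that ij by (cases "m = i \<or> m = j") (auto simp: interchange_simps)
  moreover have "Cs p ?S' a \<le> ?S' b \<or> Cs p ?S' b \<le> ?S' a"
    if "a \<in> {1..n}" "b \<in> {1..n}" "a \<noteq> b" for a b
  proof (cases "a \<in> {i, j} \<or> b \<in> {i, j}")
    case True
    then show ?thesis
      using that other_job_outside[of a] other_job_outside[of b] ends ij_distinct
      by (auto simp: Cs_def interchange_def)
  next
    case False
    then show ?thesis
      using that disjoint by (auto simp: Cs_def interchange_simps)
  qed
  moreover have "Cs p ?S' m \<le> real T1 \<or> ?S' m \<ge> real T2" if "m \<in> {1..n}" for m
    using gap that side ends by (cases "m = i \<or> m = j") (auto simp: Cs_def interchange_simps)
  ultimately show ?thesis
    unfolding valid_schedule_def by blast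
qed

lemma interchange_Delta_max_le:
  assumes "i < j"
  shows "Delta_max n p (interchange p S i j) \<le> Delta_max n p S"
proof -
  let ?D = "Delta_max n p S"
  have "\<bar>Cs p (interchange p S i j) m - Cpi p m\<bar> \<le> ?D" if "m \<in> {1..n}" for m
  proof (cases "m = i \<or> m = j")
    case True
    have "\<bar>Cs p S i - Cpi p i\<bar> \<le> ?D" "\<bar>Cs p S j - Cpi p j\<bar> \<le> ?D"
      using deviation_le_Delta_max ij by blast+
    with True show ?thesis
      using Cpi_add_le[OF assms, of p] j_before_i
      by (auto simp: Cs_def interchange_simps abs_le_iff)
  next
    case False
    then show ?thesis
      using deviation_le_Delta_max[OF that] by (simp add: Cs_def interchange_simps)
  qed
  then show ?thesis
    using Delta_max_le_iff[of n] ij by auto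
qed

lemma interchange_inversions_psubset:
  assumes "i < j"
  shows "inversions n (interchange p S i j) \<subset> inversions n S"
proof -
  have "S b < S a \<and> (a, b) \<noteq> (i, j)"
    if "a \<in> {1..n}" "b \<in> {1..n}" "a < b" "interchange p S i j b < interchange p S i j a" for a b
  proof (cases "a \<in> {i, j} \<or> b \<in> {i, j}")
    case True
    have "p a > 0" "p b > 0" "p i > 0"
      using p_pos that ij by auto
    with True show ?thesis
      using that other_job_outside[of a] other_job_outside[of b] j_before_i assms ij_distinct
      by (auto simp: interchange_def split: if_splits)
  next
    case False
    then show ?thesis
      using that by (auto simp: interchange_simps)
  qed
  then have "inversions n (interchange p S i j) \<subseteq> inversions n S - {(i, j)}"
    by (auto simp: inversions_def)
  moreover have "(i, j) \<in> inversions n S"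
    using ij assms by (auto simp: inversions_def)
  ultimately show ?thesis
    by blast
qed

end

section \<open>Optimal schedules without inversions\<close>

text \<open>An inversion inside \<open>Q\<close> whose start times are closest is adjacent.\<close>

lemma adjacent_inversion_exists:
  fixes S :: "nat \<Rightarrow> real"
  assumes convex: "\<forall>a\<in>{1..n}. \<forall>b\<in>{1..n}. \<forall>m\<in>{1..n}. Q a \<and> Q b \<and> S b < S m \<and> S m < S a \<longrightarrow> Q m"
    and "(i0, j0) \<in> inversions n S" "Q i0" "Q j0"
  obtains i j where "(i, j) \<in> inversions n S" "Q i" "Q j"
    "\<forall>m\<in>{1..n}. \<not> (S j < S m \<and> S m < S i)"
proof -
  define D where "D = {(a, b) \<in> inversions n S. Q a \<and> Q b}"
  define dist where "dist x = S (fst x) - S (snd x)" for x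
  have "finite D"
    unfolding D_def by (rule finite_subset[OF _ finite_inversions]) auto
  moreover have "D \<noteq> {}"
    using assms(2-4) by (auto simp: D_def)
  ultimately have "arg_min_on dist D \<in> D" "\<forall>y\<in>D. dist (arg_min_on dist D) \<le> dist y"
    using arg_min_if_finite[of D dist] by (auto simp: not_less)
  then obtain x where "x \<in> D" and x_min: "\<And>y. y \<in> D \<Longrightarrow> dist x \<le> dist y"
    by blast
  then obtain i j where x: "x = (i, j)" and ij: "(i, j) \<in> inversions n S" "Q i" "Q j"
    by (auto simp: D_def)
  have ij_jobs: "i \<in> {1..n}" "j \<in> {1..n}" "i < j"
    using ij(1) by (auto simp: inversions_def)
  have "\<not> (S j < S m \<and> S m < S i)" if "m \<in> {1..n}" for m
  proof
    assume between: "S j < S m \<and> S m < S i"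
    then have "Q m"
      using convex ij_jobs that ij(2,3) by blast
    have "(m, j) \<in> D \<or> (i, m) \<in> D"
    proof (cases "m < j")
      case False
      with ij_jobs have "i < m"
        by linarith
      with that ij_jobs between ij(2) \<open>Q m\<close> show ?thesis
        by (simp add: D_def inversions_def)
    qed (use that ij_jobs between ij(3) \<open>Q m\<close> in \<open>simp add: D_def inversions_def\<close>)
    then show False
    proof
      assume "(m, j) \<in> D"
      from x_min[OF this] between show False
        by (simp add: x dist_def)
    next
      assume "(i, m) \<in> D"
      from x_min[OF this] between show False
        by (simp add: x dist_def)
    qed
  qed
  with ij that show ?thesis
    by blast
qed

lemma interchange_optimal:
  assumes p_pos: "\<forall>j\<in>{1..n}. p j > 0"
    and w_pos: "\<forall>j\<in>{1..n}. w j > 0"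
    and wspt: "\<forall>i\<in>{1..n}. \<forall>j\<in>{1..n}. i \<le> j \<longrightarrow>
                 real (p i) / real (w i) \<le> real (p j) / real (w j)"
    and mu: "mu \<ge> 0"
    and opt: "optimal n p w T1 T2 k mu S"
    and inv: "(i, j) \<in> inversions n S"
    and adjacent: "\<forall>m\<in>{1..n}. \<not> (S j < S m \<and> S m < S i)"
    and side: "Cs p S i \<le> real T1 \<or> S j \<ge> real T2"
  shows "optimal n p w T1 T2 k mu (interchange p S i j)"
proof -
  let ?S' = "interchange p S i j"
  have valid: "valid_schedule n p T1 T2 S" and "Delta_max n p S \<le> real_of_int k"
    using opt unfolding optimal_def feasible_def by auto
  have ij: "i \<in> {1..n}" "j \<in> {1..n}" "i < j" "S j < S i"
    using inv by (auto simp: inversions_def)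
  note interchange = valid p_pos ij(1,2,4) adjacent
  have Delta: "Delta_max n p ?S' \<le> Delta_max n p S"
    using interchange_Delta_max_le[OF interchange ij(3)] .
  have "feasible n p T1 T2 k ?S'"
    unfolding feasible_def
    using interchange_valid_schedule[OF interchange side] Delta \<open>Delta_max n p S \<le> _\<close> by simp
  moreover have "cost n p w mu ?S' \<le> cost n p w mu S"
  proof -
    have "real (p i) / real (w i) \<le> real (p j) / real (w j)" "w i > 0" "w j > 0"
      using wspt w_pos ij by auto
    then have "(\<Sum>m\<in>{1..n}. real (w m) * Cs p ?S' m) \<le> (\<Sum>m\<in>{1..n}. real (w m) * Cs p S m)"
      using interchange_weighted_completion_le valid_schedule_precedes[OF valid ij(1,2,4)] ij
      by blast
    then show ?thesis
      unfolding cost_def using mult_left_mono[OF Delta mu] by linarith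
  qed
  ultimately show ?thesis
    using opt unfolding optimal_def by (blast intro: order_trans)
qed

text \<open>\<open>Q\<close> will be the earlier schedule, resp. the later schedule.\<close>

lemma optimal_min_inversions_ordered:
  assumes p_pos: "\<forall>j\<in>{1..n}. p j > 0"
    and w_pos: "\<forall>j\<in>{1..n}. w j > 0"
    and wspt: "\<forall>i\<in>{1..n}. \<forall>j\<in>{1..n}. i \<le> j \<longrightarrow>
                 real (p i) / real (w i) \<le> real (p j) / real (w j)"
    and mu: "mu \<ge> 0"
    and opt: "optimal n p w T1 T2 k mu S"
    and fewest_inversions: "\<forall>S'. optimal n p w T1 T2 k mu S' \<longrightarrow>
      card (inversions n S) \<le> card (inversions n S')"
    and side: "\<forall>a\<in>{1..n}. \<forall>b\<in>{1..n}. Q a \<longrightarrow> Q b \<longrightarrow> Cs p S a \<le> real T1 \<or> S b \<ge> real T2"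
    and convex: "\<forall>a\<in>{1..n}. \<forall>b\<in>{1..n}. \<forall>m\<in>{1..n}. Q a \<and> Q b \<and> S b < S m \<and> S m < S a \<longrightarrow> Q m"
  shows "\<forall>i\<in>{1..n}. \<forall>j\<in>{1..n}. i < j \<and> Q i \<and> Q j \<longrightarrow> S i < S j"
proof (rule ccontr)
  assume "\<not> ?thesis"
  then obtain i0 j0 where ij0: "i0 \<in> {1..n}" "j0 \<in> {1..n}" "i0 < j0" "Q i0" "Q j0" "\<not> S i0 < S j0"
    by blast
  have valid: "valid_schedule n p T1 T2 S"
    using opt unfolding optimal_def feasible_def by auto
  then have "S i0 \<noteq> S j0"
    using valid_schedule_start_times_inj p_pos ij0 by blast
  with ij0 have "(i0, j0) \<in> inversions n S"
    by (auto simp: inversions_def)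
  then obtain i j where ij: "(i, j) \<in> inversions n S" "Q i" "Q j"
    and adjacent: "\<forall>m\<in>{1..n}. \<not> (S j < S m \<and> S m < S i)"
    using adjacent_inversion_exists[OF convex \<open>(i0, j0) \<in> inversions n S\<close> ij0(4,5)] by blast
  have "i \<in> {1..n}" "j \<in> {1..n}" "i < j" "S j < S i"
    using ij by (auto simp: inversions_def)
  then have "optimal n p w T1 T2 k mu (interchange p S i j)"
    using interchange_optimal[OF p_pos w_pos wspt mu opt ij(1) adjacent] side ij by blast
  moreover have "card (inversions n (interchange p S i j)) < card (inversions n S)"
    using interchange_inversions_psubset[OF valid p_pos _ _ _ adjacent] finite_inversions
      \<open>i \<in> {1..n}\<close> \<open>j \<in> {1..n}\<close> \<open>i < j\<close> \<open>S j < S i\<close>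
    by (meson psubset_card_mono)
  ultimately show False
    using fewest_inversions by (meson not_le)
qed

lemma valid_schedule_late_start:
  assumes "valid_schedule n p T1 T2 S" "T1 < T2" "j \<in> {1..n}" "Cs p S j > real T2"
  shows "S j \<ge> real T2"
proof -
  have "Cs p S j \<le> real T1 \<or> S j \<ge> real T2"
    using assms(1,3) unfolding valid_schedule_def by blast
  with assms(2,4) show ?thesis
    by linarith
qed

lemma valid_schedule_early_convex:
  assumes "valid_schedule n p T1 T2 S"
  shows "\<forall>a\<in>{1..n}. \<forall>b\<in>{1..n}. \<forall>m\<in>{1..n}.
    Cs p S a \<le> real T1 \<and> Cs p S b \<le> real T1 \<and> S b < S m \<and> S m < S a \<longrightarrow> Cs p S m \<le> real T1"
proof (intro ballI impI)
  fix a b m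
  assume "a \<in> {1..n}" "b \<in> {1..n}" "m \<in> {1..n}"
    and "Cs p S a \<le> real T1 \<and> Cs p S b \<le> real T1 \<and> S b < S m \<and> S m < S a"
  with valid_schedule_precedes[OF assms, of a m] show "Cs p S m \<le> real T1"
    unfolding Cs_def by linarith
qed

lemma valid_schedule_late_convex:
  assumes "valid_schedule n p T1 T2 S" "T1 < T2"
  shows "\<forall>a\<in>{1..n}. \<forall>b\<in>{1..n}. \<forall>m\<in>{1..n}.
    Cs p S a > real T2 \<and> Cs p S b > real T2 \<and> S b < S m \<and> S m < S a \<longrightarrow> Cs p S m > real T2"
proof (intro ballI impI)
  fix a b m
  assume "a \<in> {1..n}" "b \<in> {1..n}" "m \<in> {1..n}"
    and "Cs p S a > real T2 \<and> Cs p S b > real T2 \<and> S b < S m \<and> S m < S a"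
  with valid_schedule_late_start[OF assms, of b] show "Cs p S m > real T2"
    unfolding Cs_def by linarith
qed

theorem lemma1:
  fixes n :: nat and p w :: "nat \<Rightarrow> nat" and T1 T2 :: nat and k :: int and mu :: real
  assumes p_pos: "\<forall>j\<in>{1..n}. p j > 0"
    and w_pos: "\<forall>j\<in>{1..n}. w j > 0"
    and wspt: "\<forall>i\<in>{1..n}. \<forall>j\<in>{1..n}. i \<le> j \<longrightarrow>
                 real (p i) / real (w i) \<le> real (p j) / real (w j)"
    and T12: "T1 < T2"
    and mu_rat: "mu \<in> \<rat>" and mu_nonneg: "mu \<ge> 0"
    and late_exists: "\<exists>j\<in>{1..n}. Cpi p j > real T1"
    and pmin: "real (Min (p ` {1..n})) \<le> real T1"
    and T1P: "real T1 < real (\<Sum>j\<in>{1..n}. p j)"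
    and j1: "real T2 - Spi p (LEAST j. j \<in> {1..n} \<and> Cpi p j > real T1) \<le> real_of_int k"
    and feas: "\<exists>S. feasible n p T1 T2 k S"
  shows "\<exists>S. optimal n p w T1 T2 k mu S \<and>
     (\<forall>i\<in>{1..n}. \<forall>j\<in>{1..n}. i < j \<and> Cs p S i \<le> real T1 \<and> Cs p S j \<le> real T1
        \<longrightarrow> S i < S j) \<and>
     (\<forall>i\<in>{1..n}. \<forall>j\<in>{1..n}. i < j \<and> Cs p S i > real T2 \<and> Cs p S j > real T2
        \<longrightarrow> S i < S j)"
proof -
  have "n \<ge> 1"
    using late_exists by auto
  then obtain S0 where "optimal n p w T1 T2 k mu S0"
    using optimal_schedule_exists feas by blast
  then obtain S where opt: "optimal n p w T1 T2 k mu S"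
    and fewest_inversions: "\<forall>S'. optimal n p w T1 T2 k mu S' \<longrightarrow>
      card (inversions n S) \<le> card (inversions n S')"
    using ex_has_least_nat[of "optimal n p w T1 T2 k mu" S0 "\<lambda>S. card (inversions n S)"] by blast
  have valid: "valid_schedule n p T1 T2 S"
    using opt unfolding optimal_def feasible_def by blast
  note ordered = optimal_min_inversions_ordered[OF p_pos w_pos wspt mu_nonneg opt fewest_inversions]
  have "\<forall>i\<in>{1..n}. \<forall>j\<in>{1..n}. i < j \<and> Cs p S i \<le> real T1 \<and> Cs p S j \<le> real T1 \<longrightarrow> S i < S j"
    using ordered[OF _ valid_schedule_early_convex[OF valid]] by blast
  moreover have "\<forall>i\<in>{1..n}. \<forall>j\<in>{1..n}. i < j \<and> Cs p S i > real T2 \<and> Cs p S j > real T2 \<longrightarrow> S i < S j"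
    using ordered[OF _ valid_schedule_late_convex[OF valid T12]] valid_schedule_late_start[OF valid T12]
    by blast
  ultimately show ?thesis
    using opt by blast
qed

end
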